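(* For $n\ge 0$, $$(\mathfrak C_0+\mathfrak C_2)^n=(2n)!\sum_{l=0}^{n+1}\frac{(-1)^{n-l-1}(2l-1)(3n^2-3nl+2l^2+4n-3l+1)(2n-2l-1)!!}{3\cdot 2^{n-l}(n-l+1)!\,(2l)!}\mathfrak C_{2l}.$$
   Context: The numbers $\mathfrak C_{2n}$ (Cauchy numbers with level $2$) are defined by $\frac{t}{{\rm arcsinh}\,t}=\sum_{n=0}^\infty\mathfrak C_{2n}\frac{t^{2n}}{(2n)!}$. Convolution notation: $(\mathfrak C_{2j_1}+\cdots+\mathfrak C_{2j_k})^n:=\sum_{i_1+\cdots+i_k=n,\ i_1,\dots,i_k\ge0}\frac{(2n)!}{(2i_1)!\cdots(2i_k)!}\mathfrak C_{2i_1+2j_1}\cdots\mathfrak C_{2i_k+2j_k}$. Double factorials: $(2i-1)!!=(2i-1)(2i-3)\cdots1$ for $i\ge1$, $(-1)!!=1$, and $(-(2i+1))!!=\frac{(-1)^i}{(2i-1)!!}$ for $i\ge1$. *)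

theory Defs
  imports "HOL-Analysis.Analysis"
begin

definition t_over_arsinh :: "real \<Rightarrow> real" where
  "t_over_arsinh t = (if t = 0 then 1 else t / arsinh t)"

text \<open>Cauchy numbers with level 2: cauchyC2 n is the number C_{2n}, i.e. the
  (2n)-th Taylor coefficient times (2n)! of t / arcsinh t at 0,
  i.e. its (2n)-th derivative at 0.\<close>
definition cauchyC2 :: "nat \<Rightarrow> real" where
  "cauchyC2 n = (deriv ^^ (2 * n)) t_over_arsinh 0"

definition oddprod :: "nat \<Rightarrow> real" where
  "oddprod k = (\<Prod>i=1..k. 2 * real i - 1)"

text \<open>Double factorial of an odd integer m, with (-1)!! = 1 and
  (-(2i+1))!! = (-1)^i / (2i-1)!!.\<close>
definition dfact :: "int \<Rightarrow> real" where
  "dfact m = (if m \<ge> -1 then oddprod (nat ((m + 1) div 2))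
              else (-1) ^ nat ((- m - 1) div 2) / oddprod (nat ((- m - 1) div 2)))"

end

theory Submission
  imports Defs
begin

(* Let F(t) = t / arsinh t = sum_k f_k t^k, so that C_2k = (2k)! f_2k, and let S(t) = sqrt (1 + t^2),
   whose coefficient of t^2k is binomial (1/2) k.  The left-hand side is (2n)! times the coefficient
   of t^2n in F F''.  Since arsinh' = 1 / S, F satisfies the Riccati equation F^2 = S (F - D F),
   where D = t d/dt.  Differentiating it twice and using S D S = t^2, the quadratic terms can be
   eliminated, which leaves
     6 t^2 F F'' = - (3 (D F - F) D^2 S + (3 D^2 F - 7 D F + 4 F) D S + 2 (D^3 F - 3 D^2 F + 2 D F) S),
   an identity that is linear in F.  Its coefficient of t^(2n+2) is a finite sum of the f_2l times
   binomial (1/2) (n+1-l), and expressing these binomial coefficients by double factorials gives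
   the formula. *)

unbundle no vec_syntax
unbundle fps_syntax

section \<open>Power series and the Euler operator\<close>

lemma sum_even_indices:
  fixes h :: "nat \<Rightarrow> 'a::comm_monoid_add"
  assumes "\<And>i. odd i \<Longrightarrow> h i = 0"
  shows "(\<Sum>i=0..2*n. h i) = (\<Sum>i=0..n. h (2*i))"
proof (induction n)
  case (Suc n)
  have "(\<Sum>i=0..2*Suc n. h i) = (\<Sum>i=0..2*n. h i) + h (Suc (2*n)) + h (2 * Suc n)"
    by (simp add: add.assoc)
  then show ?case using Suc assms[of "Suc (2*n)"] by simp
qed simp

lemma fps_XD_1 [simp]: "fps_XD (1 :: 'a::comm_ring_1 fps) = 0"
  by (simp add: fps_XD_def)

lemma fps_XD_diff: "fps_XD (f - g) = fps_XD f - fps_XD (g :: 'a::comm_ring_1 fps)"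
  by (simp add: fps_XD_def algebra_simps)

lemma fps_XD_mult: "fps_XD (f * g) = fps_XD f * g + f * fps_XD (g :: 'a::comm_ring_1 fps)"
  by (simp add: fps_XD_def algebra_simps)

lemma fps_XD_fps_X_power2: "fps_XD (fps_X^2 :: 'a::comm_ring_1 fps) = 2 * fps_X^2"
  by (rule fps_ext) (simp add: fps_X_power_nth)

lemma fps_X_power2_mult_deriv2:
  "fps_X^2 * fps_deriv (fps_deriv F) = fps_XD (fps_XD F) - fps_XD (F :: 'a::comm_ring_1 fps)"
  by (simp add: fps_XD_def algebra_simps power2_eq_square)

lemma fps_inverse_nth_odd:
  fixes K :: "'a::field fps"
  assumes K0: "K $ 0 \<noteq> 0" and K_odd: "\<And>m. odd m \<Longrightarrow> K $ m = 0"
  shows "odd m \<Longrightarrow> inverse K $ m = 0"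
proof (induction m rule: less_induct)
  case (less m)
  then obtain m' where m: "m = Suc m'" by (cases m) auto
  have "inverse K $ i * K $ (m - i) = 0" if "i \<le> m'" for i
  proof (cases "even i")
    case True
    then show ?thesis using less.prems K_odd[of "m - i"] that m by auto
  next
    case False
    then show ?thesis using less.IH[of i] that m by auto
  qed
  then have "(\<Sum>i=0..m'. inverse K $ i * K $ (m - i)) = 0"
    by (intro sum.neutral) auto
  moreover have "(inverse K * K) $ m = 0"
    using K0 m by (simp add: inverse_mult_eq_1)
  ultimately show ?case
    using K0 by (simp add: fps_mult_nth m)
qed

lemma fps_nth_conv_higher_deriv:
  fixes f :: "'a::{banach, real_normed_field} fps"
  assumes "fps_conv_radius f > 0"
  shows "f $ n = (deriv ^^ n) (eval_fps f) 0 / fact n"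
  using assms
proof (induction n arbitrary: f)
  case 0
  then show ?case by (simp add: eval_fps_at_0)
next
  case (Suc n f)
  have "eventually (\<lambda>z::'a. z \<in> eball 0 (fps_conv_radius f)) (nhds 0)"
    using Suc.prems by (intro eventually_nhds_in_open) (auto simp: zero_ereal_def)
  then have "eventually (\<lambda>z. deriv (eval_fps f) z = eval_fps (fps_deriv f) z) (nhds 0)"
    by eventually_elim (simp add: eval_fps_deriv)
  then have "(deriv ^^ Suc n) (eval_fps f) 0 = (deriv ^^ n) (eval_fps (fps_deriv f)) 0"
    unfolding funpow_Suc_right o_def by (intro higher_deriv_cong_ev refl)
  also have "\<dots> = fact n * fps_deriv f $ n"
    using Suc.prems fps_conv_radius_deriv[of f] Suc.IH[of "fps_deriv f"] by auto
  finally show ?case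
    by (simp add: field_simps del: of_nat_Suc)
qed

lemma fps_nth_fps_expansion_higher_deriv:
  fixes f :: "'a::{banach, real_normed_field} \<Rightarrow> 'a"
  assumes "f has_fps_expansion F"
  shows "F $ n = (deriv ^^ n) f 0 / fact n"
proof -
  have "F $ n = (deriv ^^ n) (eval_fps F) 0 / fact n"
    using assms by (intro fps_nth_conv_higher_deriv) (auto simp: has_fps_expansion_def)
  also have "(deriv ^^ n) (eval_fps F) 0 = (deriv ^^ n) f 0"
    using assms by (intro higher_deriv_cong_ev) (auto simp: has_fps_expansion_def)
  finally show ?thesis .
qed

lemma fps_conv_radius_integral:
  fixes G :: "'a::{banach, real_normed_field} fps"
  shows "fps_conv_radius G \<le> fps_conv_radius (fps_integral G c)"
proof -
  have "conv_radius (\<lambda>n. G $ n) \<le> conv_radius (\<lambda>n. G $ n / of_nat (Suc n))"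
  proof (rule conv_radius_geI_ex)
    fix r :: real assume r: "r > 0" "ereal r < conv_radius (\<lambda>n. G $ n)"
    have "summable (\<lambda>n. norm (G $ n * of_real r ^ n))"
      using r by (intro abs_summable_in_conv_radius) auto
    moreover have "norm (G $ n / of_nat (Suc n) * of_real r ^ n) \<le> norm (G $ n * of_real r ^ n)" for n
    proof -
      have "norm (G $ n / of_nat (Suc n) * of_real r ^ n) = norm (G $ n * of_real r ^ n) / real (Suc n)"
        by (simp add: norm_mult norm_divide del: of_nat_Suc)
      also have "\<dots> \<le> norm (G $ n * of_real r ^ n)"
        using frac_le[of "norm (G $ n * of_real r ^ n)" _ 1] by force
      finally show ?thesis .
    qed
    ultimately have "summable (\<lambda>n. G $ n / of_nat (Suc n) * of_real r ^ n)"
      by (rule summable_comparison_test'[where N = 0])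
    then show "\<exists>z::'a. norm z = r \<and> summable (\<lambda>n. G $ n / of_nat (Suc n) * z ^ n)"
      using r by (intro exI[of _ "of_real r"]) auto
  qed
  also have "\<dots> = conv_radius (\<lambda>n. fps_integral G c $ (n + 1))"
    by (simp add: field_simps)
  also have "\<dots> = fps_conv_radius (fps_integral G c)"
    unfolding fps_conv_radius_def by (rule conv_radius_shift)
  finally show ?thesis by (simp add: fps_conv_radius_def)
qed

lemma has_fps_expansion_integral:
  fixes f g :: "'a::{banach, real_normed_field} \<Rightarrow> 'a"
  assumes G: "g has_fps_expansion G"
    and deriv: "eventually (\<lambda>x. (f has_field_derivative g x) (at x)) (nhds 0)"
  shows "f has_fps_expansion fps_integral G (f 0)"
proof -
  define I where "I = fps_integral G (f 0)"
  have rad: "fps_conv_radius I > 0"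
    using G fps_conv_radius_integral[of G "f 0"] by (auto simp: has_fps_expansion_def I_def)
  have "eventually (\<lambda>x. x \<in> eball 0 (fps_conv_radius I)) (nhds 0)"
    using rad by (intro eventually_nhds_in_open) (auto simp: zero_ereal_def)
  moreover have "eventually (\<lambda>x. eval_fps G x = g x) (nhds 0)"
    using G by (simp add: has_fps_expansion_def)
  ultimately have "eventually (\<lambda>x. norm x < fps_conv_radius I \<and> eval_fps G x = g x
      \<and> (f has_field_derivative g x) (at x)) (nhds 0)"
    using deriv by eventually_elim auto
  then obtain r where r: "r > 0" and P: "\<And>x. norm x < r \<Longrightarrow> norm x < fps_conv_radius I
      \<and> eval_fps G x = g x \<and> (f has_field_derivative g x) (at x)"
    unfolding eventually_nhds_metric by (auto simp: dist_norm)
  have "\<exists>c. \<forall>x\<in>ball 0 r. eval_fps I x - f x = c"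
  proof (rule has_field_derivative_zero_constant)
    fix x :: 'a assume "x \<in> ball 0 r"
    then have x: "norm x < fps_conv_radius I" "eval_fps G x = g x" "(f has_field_derivative g x) (at x)"
      using P[of x] by auto
    have "((\<lambda>x. eval_fps I x - f x) has_field_derivative eval_fps (fps_deriv I) x - g x) (at x)"
      by (intro DERIV_diff has_field_derivative_eval_fps x)
    then show "((\<lambda>x. eval_fps I x - f x) has_field_derivative 0) (at x within ball 0 r)"
      using x by (simp add: I_def fps_deriv_fps_integral has_field_derivative_at_within)
  qed simp
  then obtain c where c: "\<And>x. x \<in> ball 0 r \<Longrightarrow> eval_fps I x - f x = c"
    by blast
  have "c = 0"
    using c[of 0] r by (simp add: eval_fps_at_0 I_def)
  then have "\<forall>x\<in>ball 0 r. eval_fps I x = f x"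
    using c by simp
  then have "eventually (\<lambda>x. eval_fps I x = f x) (nhds 0)"
    using r unfolding eventually_nhds_metric by (auto simp: dist_norm)
  with rad show ?thesis
    by (simp add: has_fps_expansion_def I_def)
qed

section \<open>The binomial series of (1 + t^2)^a\<close>

definition fps_binomial_sq :: "'a::field_char_0 \<Rightarrow> 'a fps" where
  "fps_binomial_sq a = Abs_fps (\<lambda>m. if even m then a gchoose (m div 2) else 0)"

lemma fps_binomial_sq_nth: "fps_binomial_sq a $ m = (if even m then a gchoose (m div 2) else 0)"
  by (simp add: fps_binomial_sq_def)

lemma fps_binomial_sq_nth_double [simp]: "fps_binomial_sq a $ (2 * k) = a gchoose k"
  by (simp add: fps_binomial_sq_nth)

lemma fps_binomial_sq_add: "fps_binomial_sq a * fps_binomial_sq b = fps_binomial_sq (a + b)"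
proof (rule fps_ext)
  fix m
  show "(fps_binomial_sq a * fps_binomial_sq b) $ m = fps_binomial_sq (a + b) $ m"
  proof (cases "even m")
    case True
    then obtain n where m: "m = 2 * n" by blast
    have "(fps_binomial_sq a * fps_binomial_sq b) $ m
        = (\<Sum>i=0..n. fps_binomial_sq a $ (2*i) * fps_binomial_sq b $ (2*n - 2*i))"
      unfolding m fps_mult_nth by (rule sum_even_indices) (simp add: fps_binomial_sq_nth)
    also have "\<dots> = (\<Sum>i=0..n. (a gchoose i) * (b gchoose (n - i)))"
      by (intro sum.cong) (auto simp flip: diff_mult_distrib2)
    also have "\<dots> = (a + b) gchoose n" by (rule gbinomial_Vandermonde)
    finally show ?thesis by (simp add: m)
  next
    case False
    then have "odd i \<or> odd (m - i)" if "i \<le> m" for i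
      using that by auto
    then show ?thesis
      using False by (auto simp: fps_mult_nth fps_binomial_sq_nth intro!: sum.neutral)
  qed
qed

lemma fps_binomial_sq_0 [simp]: "fps_binomial_sq 0 = 1"
  by (rule fps_ext) (auto simp: fps_binomial_sq_nth gbinomial_0_left)

lemma fps_binomial_sq_1: "fps_binomial_sq 1 = 1 + fps_X^2"
proof (rule fps_ext)
  fix m
  have "(1 gchoose k :: 'a) = (if k \<le> 1 then 1 else 0)" for k
    using binomial_gbinomial[of 1 k, where 'a='a] by (auto simp: le_Suc_eq binomial_eq_0)
  then show "fps_binomial_sq 1 $ m = (1 + fps_X^2 :: 'a fps) $ m"
    by (auto simp: fps_binomial_sq_nth fps_X_power_nth elim!: evenE)
qed

lemma fps_binomial_sq_half_square: "fps_binomial_sq (1/2) ^ 2 = (1 + fps_X^2 :: 'a::field_char_0 fps)"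
  using fps_binomial_sq_add[of "1/2" "1/2"] by (simp add: power2_eq_square fps_binomial_sq_1)

lemma has_fps_expansion_binomial_sq:
  "(\<lambda>t::real. (1 + t^2) powr a) has_fps_expansion fps_binomial_sq a"
proof (rule has_fps_expansionI)
  have "(\<lambda>m. fps_binomial_sq a $ m * t ^ m) sums (1 + t^2) powr a" if "\<bar>t\<bar> < 1" for t :: real
  proof -
    have "(\<lambda>k. fps_binomial_sq a $ (2*k) * t ^ (2*k)) sums (1 + t^2) powr a"
      using gen_binomial_real[of "t^2" a] that by (simp add: power_mult abs_square_less_1)
    moreover have "fps_binomial_sq a $ m * t ^ m = 0" if "m \<notin> range (\<lambda>k. 2*k)" for m
      using that by (auto simp: fps_binomial_sq_nth elim!: evenE)
    moreover have "strict_mono (\<lambda>k::nat. 2*k)"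
      by (auto simp: strict_mono_def)
    ultimately show ?thesis
      using sums_mono_reindex[of "\<lambda>k. 2*k" "\<lambda>m. fps_binomial_sq a $ m * t ^ m"] by blast
  qed
  moreover have "eventually (\<lambda>t::real. t \<in> ball 0 1) (nhds 0)"
    by (intro eventually_nhds_in_open) auto
  ultimately show "eventually (\<lambda>t. (\<lambda>m. fps_binomial_sq a $ m * t ^ m) sums (1 + t^2) powr a) (nhds 0)"
    by (auto elim!: eventually_mono)
qed

lemma gbinomial_half_Suc:
  "(1/2::real) gchoose Suc j = (-1)^j * oddprod j / (2 ^ Suc j * fact (Suc j))"
proof (induction j)
  case 0
  then show ?case by (simp add: oddprod_def)
next
  case (Suc j)
  have "real (Suc (Suc j)) * ((1/2) gchoose Suc (Suc j)) = (1/2 - real (Suc j)) * ((1/2) gchoose Suc j)"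
    using gbinomial_mult_1[of "1/2::real" "Suc j"] by (simp add: algebra_simps)
  then have "(1/2) gchoose Suc (Suc j) = - (2 * real j + 1) / 2 * ((1/2) gchoose Suc j) / real (Suc (Suc j))"
    by (simp add: field_simps)
  also have "\<dots> = (-1)^Suc j * (oddprod j * (2 * real j + 1)) / (2 ^ Suc (Suc j) * fact (Suc (Suc j)))"
    unfolding Suc.IH by (simp add: field_simps del: of_nat_Suc)
  also have "oddprod j * (2 * real j + 1) = oddprod (Suc j)"
    by (simp add: oddprod_def)
  finally show ?case .
qed

(* For k = 0 this relies on the convention (-3)!! = -1. *)
lemma gbinomial_half_conv_dfact:
  "(1/2::real) gchoose k = - ((-1) powi (int k - 2) * dfact (2 * int k - 3) / (2 powi (int k - 1) * fact k)) / 2"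
proof (cases k)
  case 0
  then show ?thesis
    by (simp add: dfact_def oddprod_def power_int_minus)
next
  case (Suc j)
  have "(-1::real) powi (int k - 2) = - ((-1) ^ j)"
    using Suc by (simp add: power_int_diff)
  moreover have "(2::real) powi (int k - 1) = 2 ^ k / 2"
    by (simp add: power_int_diff)
  moreover have "dfact (2 * int k - 3) = oddprod j"
    using Suc by (simp add: dfact_def)
  ultimately show ?thesis
    using gbinomial_half_Suc[of j] Suc by (simp add: field_simps)
qed

section \<open>Linearizing a Riccati equation\<close>

lemma fps_riccati_of_inverse:
  fixes F K S :: "'a::comm_ring_1 fps"
  assumes FK: "F * K = 1" and S: "S * (K + fps_XD K) = 1"
  shows "F^2 = S * (F - fps_XD F)"
proof -
  have "fps_XD F * K + F * fps_XD K = 0"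
    using arg_cong[OF FK, of fps_XD] by (simp only: fps_XD_mult fps_XD_1)
  then have "F * fps_XD K = - (fps_XD F * K)"
    by (simp add: eq_neg_iff_add_eq_0 add.commute)
  then have "F^2 * (K + fps_XD K) = F * (F * K) - fps_XD F * (F * K)"
    by (simp add: power2_eq_square algebra_simps)
  also have "\<dots> = F - fps_XD F"
    using FK by simp
  finally have "S * (F - fps_XD F) = F^2 * (S * (K + fps_XD K))"
    by (simp only: ac_simps)
  then show ?thesis
    using S by simp
qed

(* f, f1, f2, f3 stand for F, D F, D^2 F, D^3 F and s, s1, s2 for S, D S, D^2 S, with y = t^2;
   the hypotheses are S^2 = 1 + y differentiated once and twice, and the Riccati equation together
   with its first two derivatives. *)
lemma riccati_linearization:
  fixes s s1 s2 f f1 f2 f3 y :: "'a::idom"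
  assumes "s \<noteq> 0"
    and S1: "s * s1 = y" and S2: "s1 * s1 + s * s2 = 2 * y"
    and R0: "f * f = s * (f - f1)"
    and R1: "f1 * f + f * f1 = s1 * (f - f1) + s * (f1 - f2)"
    and R2: "f2 * f + f1 * f1 + (f1 * f1 + f * f2)
             = s2 * (f - f1) + s1 * (f1 - f2) + (s1 * (f1 - f2) + s * (f2 - f3))"
  shows "6 * f * (f2 - f1) = - (3 * (f1 - f) * s2 + (3 * f2 - 7 * f1 + 4 * f) * s1
                                + 2 * (f3 - 3 * f2 + 2 * f1) * s)"
proof -
  define T where "T = 6 * f * (f2 - f1) + (3 * (f1 - f) * s2 + (3 * f2 - 7 * f1 + 4 * f) * s1
                                + 2 * (f3 - 3 * f2 + 2 * f1) * s)"
  have "T = 2 * f * (f2 + f1) - 4 * f1^2 - s2 * (f - f1) + s1 * (f1 - f2)"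
    unfolding T_def using R1 R2 by algebra
  also have "s * \<dots> = 2 * (s1 * f^2 - y * (f - f1))"
    using R0 R1 S2 by algebra
  also have "s * \<dots> = 0"
    using R0 S1 by algebra
  finally have "s * (s * T) = 0"
    by (simp add: mult.assoc)
  then have "T = 0"
    using \<open>s \<noteq> 0\<close> by simp
  then show ?thesis
    unfolding T_def eq_neg_iff_add_eq_0 .
qed

lemma fps_riccati_linearization:
  fixes F S :: "'a::field_char_0 fps"
  assumes S: "S^2 = 1 + fps_X^2" and R: "F^2 = S * (F - fps_XD F)"
  shows "6 * F * (fps_XD (fps_XD F) - fps_XD F) =
         - (3 * (fps_XD F - F) * fps_XD (fps_XD S)
            + (3 * fps_XD (fps_XD F) - 7 * fps_XD F + 4 * F) * fps_XD S
            + 2 * (fps_XD (fps_XD (fps_XD F)) - 3 * fps_XD (fps_XD F) + 2 * fps_XD F) * S)"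
proof (rule riccati_linearization)
  have "(S^2) $ 0 = (1 + fps_X^2 :: 'a fps) $ 0"
    using S by (rule arg_cong)
  then show "S \<noteq> 0"
    by auto
  have "fps_XD (S^2) = 2 * (S * fps_XD S)"
    by (simp only: power2_eq_square fps_XD_mult mult.commute[of "fps_XD S" S] mult_2)
  then have "2 * (S * fps_XD S) = 2 * fps_X^2"
    using S by (simp add: fps_XD_fps_X_power2)
  then show S1: "S * fps_XD S = fps_X^2"
    by simp
  show "fps_XD S * fps_XD S + S * fps_XD (fps_XD S) = 2 * fps_X^2"
    using arg_cong[OF S1, of fps_XD] by (simp only: fps_XD_mult fps_XD_fps_X_power2)
  show R0: "F * F = S * (F - fps_XD F)"
    using R by (simp only: power2_eq_square)
  show R1: "fps_XD F * F + F * fps_XD F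
            = fps_XD S * (F - fps_XD F) + S * (fps_XD F - fps_XD (fps_XD F))"
    using arg_cong[OF R0, of fps_XD] by (simp only: fps_XD_mult fps_XD_diff)
  show "fps_XD (fps_XD F) * F + fps_XD F * fps_XD F + (fps_XD F * fps_XD F + F * fps_XD (fps_XD F))
        = fps_XD (fps_XD S) * (F - fps_XD F) + fps_XD S * (fps_XD F - fps_XD (fps_XD F))
          + (fps_XD S * (fps_XD F - fps_XD (fps_XD F))
             + S * (fps_XD (fps_XD F) - fps_XD (fps_XD (fps_XD F))))"
    using arg_cong[OF R1, of fps_XD] by (simp only: fps_XD_mult fps_XD_diff fps_XD_add)
qed

definition riccati_weight :: "nat \<Rightarrow> nat \<Rightarrow> 'a::comm_ring_1" where
  "riccati_weight i j = 3 * (of_nat i - 1) * of_nat j ^ 2 + (3 * of_nat i ^ 2 - 7 * of_nat i + 4) * of_nat j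
                        + 2 * (of_nat i ^ 3 - 3 * of_nat i ^ 2 + 2 * of_nat i)"

lemma fps_riccati_rhs_nth:
  fixes F S :: "'a::comm_ring_1 fps"
  shows "(3 * (fps_XD F - F) * fps_XD (fps_XD S)
            + (3 * fps_XD (fps_XD F) - 7 * fps_XD F + 4 * F) * fps_XD S
            + 2 * (fps_XD (fps_XD (fps_XD F)) - 3 * fps_XD (fps_XD F) + 2 * fps_XD F) * S) $ m
         = (\<Sum>i=0..m. riccati_weight i (m - i) * F $ i * S $ (m - i))"
proof -
  let ?A = "3 * (fps_XD F - F)"
  let ?B = "3 * fps_XD (fps_XD F) - 7 * fps_XD F + 4 * F"
  let ?C = "2 * (fps_XD (fps_XD (fps_XD F)) - 3 * fps_XD (fps_XD F) + 2 * fps_XD F)"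
  have coeffs: "?A $ i = 3 * (of_nat i - 1) * F $ i"
    "?B $ i = (3 * of_nat i ^ 2 - 7 * of_nat i + 4) * F $ i"
    "?C $ i = 2 * (of_nat i ^ 3 - 3 * of_nat i ^ 2 + 2 * of_nat i) * F $ i" for i
    by (simp_all only: fps_sub_nth fps_add_nth fps_mult_numeral_left fps_XD_nth)
       (simp_all add: algebra_simps power2_eq_square power3_eq_cube)
  have "(?A * fps_XD (fps_XD S) + ?B * fps_XD S + ?C * S) $ m
      = (\<Sum>i=0..m. ?A $ i * fps_XD (fps_XD S) $ (m - i) + ?B $ i * fps_XD S $ (m - i) + ?C $ i * S $ (m - i))"
    by (simp only: fps_add_nth fps_mult_nth[of ?A] fps_mult_nth[of ?B] fps_mult_nth[of ?C] sum.distrib)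
  also have "\<dots> = (\<Sum>i=0..m. riccati_weight i (m - i) * F $ i * S $ (m - i))"
    by (intro sum.cong refl)
       (simp only: coeffs fps_XD_nth, simp add: riccati_weight_def algebra_simps power2_eq_square)
  finally show ?thesis .
qed

section \<open>The power series of t / arsinh t\<close>

definition arsinh_fps :: "real fps" where
  "arsinh_fps = fps_integral0 (fps_binomial_sq (-1/2))"

lemma has_fps_expansion_arsinh: "arsinh has_fps_expansion arsinh_fps"
proof -
  have "(arsinh has_field_derivative (1 + x^2) powr (-1/2)) (at x)" for x :: real
  proof -
    have "(1 + x^2) powr (-1/2) = 1 / sqrt (x^2 + 1)"
      using powr_minus[of "1 + x^2" "1/2"] powr_half_sqrt[of "1 + x^2"]
      by (simp add: add.commute inverse_eq_divide)
    then show ?thesis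
      by (simp only: arsinh_real_has_field_derivative)
  qed
  then show ?thesis
    using has_fps_expansion_integral[OF has_fps_expansion_binomial_sq, of arsinh "-1/2"]
    by (simp add: arsinh_fps_def)
qed

definition arsinh_over_t_fps :: "real fps" where
  "arsinh_over_t_fps = fps_shift 1 arsinh_fps"

definition t_over_arsinh_fps :: "real fps" where
  "t_over_arsinh_fps = inverse arsinh_over_t_fps"

lemma subdegree_arsinh_fps: "subdegree arsinh_fps = 1"
  by (rule subdegreeI) (simp_all add: arsinh_fps_def fps_binomial_sq_nth)

lemma arsinh_over_t_fps_nth_0: "arsinh_over_t_fps $ 0 = 1"
  by (simp add: arsinh_over_t_fps_def arsinh_fps_def fps_binomial_sq_nth)

lemma has_fps_expansion_t_over_arsinh: "t_over_arsinh has_fps_expansion t_over_arsinh_fps"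
proof -
  have "(\<lambda>x. if x = 0 then 1 else arsinh x / x ^ 1) has_fps_expansion arsinh_over_t_fps"
    unfolding arsinh_over_t_fps_def
    by (rule has_fps_expansion_shift[OF has_fps_expansion_arsinh])
       (simp add: subdegree_arsinh_fps, simp add: arsinh_fps_def fps_binomial_sq_nth)
  then have "(\<lambda>x. if x = 0 then 1 else arsinh x / x) has_fps_expansion arsinh_over_t_fps"
    by (simp only: power_one_right)
  then have "(\<lambda>x. inverse (if x = 0 then 1 else arsinh x / x)) has_fps_expansion t_over_arsinh_fps"
    unfolding t_over_arsinh_fps_def
    by (rule has_fps_expansion_inverse) (simp add: arsinh_over_t_fps_nth_0)
  moreover have "(\<lambda>x. inverse (if x = 0 then 1 else arsinh x / x)) = t_over_arsinh"
    by (auto simp: t_over_arsinh_def)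
  ultimately show ?thesis by simp
qed

lemma cauchyC2_conv_fps_nth: "cauchyC2 k = fact (2 * k) * t_over_arsinh_fps $ (2 * k)"
  using fps_nth_fps_expansion_higher_deriv[OF has_fps_expansion_t_over_arsinh, of "2 * k"]
  by (simp add: cauchyC2_def)

lemma t_over_arsinh_fps_nth_odd: "odd m \<Longrightarrow> t_over_arsinh_fps $ m = 0"
  unfolding t_over_arsinh_fps_def
  by (rule fps_inverse_nth_odd)
     (auto simp: arsinh_over_t_fps_def arsinh_fps_def fps_binomial_sq_nth)

lemma t_over_arsinh_fps_riccati:
  "t_over_arsinh_fps^2 = fps_binomial_sq (1/2) * (t_over_arsinh_fps - fps_XD t_over_arsinh_fps)"
proof (rule fps_riccati_of_inverse)
  let ?K = arsinh_over_t_fps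
  show "t_over_arsinh_fps * ?K = 1"
    by (simp add: t_over_arsinh_fps_def inverse_mult_eq_1 arsinh_over_t_fps_nth_0)
  have "fps_X * ?K = arsinh_fps"
    unfolding arsinh_over_t_fps_def
    by (subst mult.commute, rule fps_shift_times_fps_X) (simp add: subdegree_arsinh_fps)
  from arg_cong[OF this, of fps_deriv] have "?K + fps_XD ?K = fps_binomial_sq (-1/2)"
    by (simp add: fps_XD_def arsinh_fps_def fps_deriv_fps_integral add.commute)
  then show "fps_binomial_sq (1/2) * (?K + fps_XD ?K) = 1"
    by (simp add: fps_binomial_sq_add)
qed

lemma t_over_arsinh_fps_mult_deriv2_nth:
  "6 * (t_over_arsinh_fps * fps_deriv (fps_deriv t_over_arsinh_fps)) $ (2 * n)
   = - (\<Sum>l=0..n+1. riccati_weight (2 * l) (2 * (n + 1 - l)) * t_over_arsinh_fps $ (2 * l)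
                     * ((1/2) gchoose (n + 1 - l)))"
proof -
  let ?F = t_over_arsinh_fps and ?S = "fps_binomial_sq (1/2) :: real fps"
  have "6 * (?F * fps_deriv (fps_deriv ?F)) $ (2 * n)
      = (fps_X^2 * (6 * (?F * fps_deriv (fps_deriv ?F)))) $ (2 * (n + 1))"
    by (simp add: fps_X_power_mult_nth)
  also have "\<dots> = (6 * ?F * (fps_XD (fps_XD ?F) - fps_XD ?F)) $ (2 * (n + 1))"
    by (simp only: fps_X_power2_mult_deriv2[symmetric] ac_simps)
  also have "\<dots> = - (\<Sum>i=0..2 * (n + 1). riccati_weight i (2 * (n + 1) - i) * ?F $ i * ?S $ (2 * (n + 1) - i))"
    by (simp only: fps_riccati_linearization[OF fps_binomial_sq_half_square t_over_arsinh_fps_riccati]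
                   fps_neg_nth fps_riccati_rhs_nth)
  also have "(\<Sum>i=0..2 * (n + 1). riccati_weight i (2 * (n + 1) - i) * ?F $ i * ?S $ (2 * (n + 1) - i))
      = (\<Sum>l=0..n+1. riccati_weight (2 * l) (2 * (n + 1) - 2 * l) * ?F $ (2 * l) * ?S $ (2 * (n + 1) - 2 * l))"
    by (rule sum_even_indices) (simp add: t_over_arsinh_fps_nth_odd)
  also have "\<dots> = (\<Sum>l=0..n+1. riccati_weight (2 * l) (2 * (n + 1 - l)) * ?F $ (2 * l)
                                    * ((1/2) gchoose (n + 1 - l)))"
    by (simp only: diff_mult_distrib2[symmetric] fps_binomial_sq_nth_double)
  finally show ?thesis .
qed

lemma cauchyC2_Suc_conv_deriv2:
  "cauchyC2 (Suc j) = fact (2 * j) * fps_deriv (fps_deriv t_over_arsinh_fps) $ (2 * j)"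
proof -
  have "fact (2 * Suc j) = (2 * real j + 1) * (2 * real j + 2) * (fact (2 * j) :: real)"
    by (simp add: algebra_simps)
  then show ?thesis
    by (simp add: cauchyC2_conv_fps_nth algebra_simps)
qed

lemma cauchyC2_convolution:
  "(\<Sum>i\<le>n. fact (2 * n) / (fact (2 * i) * fact (2 * (n - i))) * cauchyC2 i * cauchyC2 (n - i + 1))
   = fact (2 * n) * (t_over_arsinh_fps * fps_deriv (fps_deriv t_over_arsinh_fps)) $ (2 * n)"
proof -
  let ?F = t_over_arsinh_fps
  have "(?F * fps_deriv (fps_deriv ?F)) $ (2 * n)
      = (\<Sum>i=0..n. ?F $ (2 * i) * fps_deriv (fps_deriv ?F) $ (2 * n - 2 * i))"
    unfolding fps_mult_nth by (rule sum_even_indices) (simp add: t_over_arsinh_fps_nth_odd)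
  also have "\<dots> = (\<Sum>i\<le>n. cauchyC2 i * cauchyC2 (n - i + 1) / (fact (2 * i) * fact (2 * (n - i))))"
    by (intro sum.cong) (auto simp: cauchyC2_conv_fps_nth cauchyC2_Suc_conv_deriv2 simp flip: diff_mult_distrib2)
  finally show ?thesis
    by (simp add: sum_distrib_left field_simps)
qed

section \<open>The convolution formula\<close>

lemma theorem3_summand:
  fixes n l :: nat
  assumes "l \<le> n + 1"
  shows "((-1) powi (int n - int l - 1) * (2 * real l - 1)
             * (3 * (real n)^2 - 3 * real n * real l + 2 * (real l)^2 + 4 * real n - 3 * real l + 1)
             * dfact (2 * (int n - int l) - 1))
           / (3 * 2 powi (int n - int l) * fact (n + 1 - l) * fact (2 * l))
           * cauchyC2 l
       = - (riccati_weight (2 * l) (2 * (n + 1 - l)) * t_over_arsinh_fps $ (2 * l)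
            * ((1/2) gchoose (n + 1 - l))) / 6"
proof -
  define k where "k = n + 1 - l"
  define Q where "Q = 3 * (real n)^2 - 3 * real n * real l + 2 * (real l)^2 + 4 * real n - 3 * real l + 1"
  have exps: "int n - int l - 1 = int k - 2" "int n - int l = int k - 1"
      "2 * (int n - int l) - 1 = 2 * int k - 3"
    using assms by (simp_all add: k_def)
  have n: "real n = real k + real l - 1"
    using assms by (simp add: k_def of_nat_diff)
  have weight: "riccati_weight (2 * l) (2 * k) = 4 * (2 * real l - 1) * Q"
    unfolding riccati_weight_def Q_def n by (simp add: algebra_simps power2_eq_square power3_eq_cube)
  show ?thesis
    unfolding exps k_def[symmetric] Q_def[symmetric] weight gbinomial_half_conv_dfact cauchyC2_conv_fps_nth
    by (simp add: field_simps)
qed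

theorem theorem3:
  fixes n :: nat
  shows "(\<Sum>i\<le>n. fact (2 * n) / (fact (2 * i) * fact (2 * (n - i)))
                  * cauchyC2 i * cauchyC2 (n - i + 1))
       = fact (2 * n) * (\<Sum>l = 0..n + 1.
           ((-1) powi (int n - int l - 1) * (2 * real l - 1)
             * (3 * (real n)^2 - 3 * real n * real l + 2 * (real l)^2 + 4 * real n - 3 * real l + 1)
             * dfact (2 * (int n - int l) - 1))
           / (3 * 2 powi (int n - int l) * fact (n + 1 - l) * fact (2 * l))
           * cauchyC2 l)"
proof -
  have "(\<Sum>l = 0..n + 1.
           ((-1) powi (int n - int l - 1) * (2 * real l - 1)
             * (3 * (real n)^2 - 3 * real n * real l + 2 * (real l)^2 + 4 * real n - 3 * real l + 1)
             * dfact (2 * (int n - int l) - 1))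
           / (3 * 2 powi (int n - int l) * fact (n + 1 - l) * fact (2 * l))
           * cauchyC2 l)
      = - (\<Sum>l=0..n+1. riccati_weight (2 * l) (2 * (n + 1 - l)) * t_over_arsinh_fps $ (2 * l)
                         * ((1/2) gchoose (n + 1 - l))) / 6"
    by (subst sum.cong[OF refl theorem3_summand])
       (simp_all only: atLeastAtMost_iff sum_divide_distrib[symmetric] sum_negf)
  also have "\<dots> = (t_over_arsinh_fps * fps_deriv (fps_deriv t_over_arsinh_fps)) $ (2 * n)"
    using t_over_arsinh_fps_mult_deriv2_nth[of n] by simp
  finally show ?thesis
    by (simp only: cauchyC2_convolution)
qed

end
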